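(* Let $A \in \mathbb{C}^{m\times n}$, $B \in \mathbb{C}^{p\times q}$, $C \in \mathbb{C}^{m\times q}$. Then there always exists $\widehat{X} \in \mathbb{C}^{n\times p}$ such that $A^{*}(C - AXB)(C - AXB)^{*}A \succcurlyeq A^{*}(C - A\widehat{X}B)(C - A\widehat{X}B)^{*}A$ for all $X \in \mathbb{C}^{n\times p}$, and there always exists $\widehat{X} \in \mathbb{C}^{n\times p}$ such that $B(C - AXB)^{*}(C - AXB)B^{*} \succcurlyeq B(C - A\widehat{X}B)^{*}(C - A\widehat{X}B)B^{*}$ for all $X \in \mathbb{C}^{n\times p}$. Moreover, the set of such minimizers $\widehat{X}$ for the first problem, the set of such minimizers for the second problem, and the set of minimizers of $X \mapsto \mathrm{tr}[(C - AXB)(C - AXB)^{*}]$ over $\mathbb{C}^{n\times p}$ all coincide and equal $\{A^{\dagger}CB^{\dagger} + F_AV_1 + V_2E_B : V_1, V_2 \in \mathbb{C}^{n\times p}\}$.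
   Context: $\succcurlyeq$ is the Löwner order ($P \succcurlyeq Q$ iff $P - Q$ is positive semidefinite); $U^{\dagger}$ is the Moore–Penrose inverse; $E_U = I - UU^{\dagger}$, $F_U = I - U^{\dagger}U$; $\mathrm{tr}$ is the trace. *)

theory Defs
  imports "HOL-Analysis.Analysis"
begin

text \<open>Complex matrices are rendered as \<open>complex^'c^'r\<close> (r rows, c columns).\<close>

definition cadj :: "complex^'c^'r \<Rightarrow> complex^'r^'c" where
  "cadj A = (\<chi> i j. cnj (A $ j $ i))"

definition hermitian :: "complex^'n^'n \<Rightarrow> bool" where
  "hermitian M \<longleftrightarrow> cadj M = M"

definition psd :: "complex^'n^'n \<Rightarrow> bool" where
  "psd M \<longleftrightarrow> hermitian M \<and>
     (\<forall>x :: complex^'n. 0 \<le> Re (\<Sum>i\<in>UNIV. cnj (x $ i) * (M *v x) $ i))"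

definition loewner_ge :: "complex^'n^'n \<Rightarrow> complex^'n^'n \<Rightarrow> bool" where
  "loewner_ge P Q \<longleftrightarrow> psd (P - Q)"

definition mp_inv :: "complex^'c^'r \<Rightarrow> complex^'r^'c" where
  "mp_inv A = (THE G. A ** G ** A = A \<and> G ** A ** G = G \<and>
                      cadj (A ** G) = A ** G \<and> cadj (G ** A) = G ** A)"

definition E_mat :: "complex^'c^'r \<Rightarrow> complex^'r^'r" where
  "E_mat U = mat 1 - U ** mp_inv U"

definition F_mat :: "complex^'c^'r \<Rightarrow> complex^'c^'c" where
  "F_mat U = mat 1 - mp_inv U ** U"

end

theory Submission
  imports Defs
begin

text \<open>Put \<open>X\<^sub>0 = A\<^sup>\<dagger>CB\<^sup>\<dagger>\<close> and \<open>D = C - AX\<^sub>0B\<close>. The Penrose equations give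
  \<open>A\<^sup>*DB\<^sup>* = 0\<close>, so in the splitting \<open>C - AXB = D + A(X\<^sub>0 - X)B\<close> the cross terms
  of each of the three objective functions vanish; for instance
  \<open>A\<^sup>*(C - AXB)(C - AXB)\<^sup>*A = A\<^sup>*DD\<^sup>*A + GG\<^sup>*\<close> with \<open>G = A\<^sup>*A(X\<^sub>0 - X)B\<close>.
  Each objective is thus its value at \<open>X\<^sub>0\<close> plus a term \<open>GG\<^sup>*\<close> (for the trace,
  \<open>tr VV\<^sup>*\<close> with \<open>V = A(X\<^sub>0 - X)B\<close>) which is \<open>\<succcurlyeq> 0\<close> and vanishes exactly when
  \<open>A(X\<^sub>0 - X)B = 0\<close>, because \<open>A\<^sup>*AY = 0\<close> forces \<open>AY = 0\<close>. Hence all three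
  minimizer sets are the solution set of \<open>AXB = AX\<^sub>0B\<close>, which is
  \<open>X\<^sub>0 + F\<^sub>AV\<^sub>1 + V\<^sub>2E\<^sub>B\<close>.\<close>

lemma cadj_cadj [simp]: "cadj (cadj A) = A"
  by (simp add: cadj_def vec_eq_iff)

lemma cadj_mult: "cadj (A ** B) = cadj B ** cadj A"
  by (simp add: cadj_def vec_eq_iff matrix_matrix_mult_def mult.commute)

lemma cadj_add [simp]: "cadj (A + B) = cadj A + cadj B"
  by (simp add: cadj_def vec_eq_iff)

lemma cadj_0 [simp]: "cadj 0 = 0"
  by (simp add: cadj_def vec_eq_iff)

lemma cadj_eq_0_iff [simp]: "cadj A = 0 \<longleftrightarrow> A = 0"
  by (metis cadj_0 cadj_cadj)

lemma matrix_add_rdistrib: "((A :: 'a::semiring_1^'n^'m) + B) ** C = A ** C + B ** C"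
  by (simp add: matrix_matrix_mult_def vec_eq_iff algebra_simps sum.distrib)

lemma matrix_diff_ldistrib: "(A :: 'a::ring_1^'n^'m) ** (B - C) = A ** B - A ** C"
  by (simp add: matrix_matrix_mult_def vec_eq_iff algebra_simps sum_subtractf)

lemma matrix_diff_rdistrib: "((A :: 'a::ring_1^'n^'m) - B) ** C = A ** C - B ** C"
  by (simp add: matrix_matrix_mult_def vec_eq_iff algebra_simps sum_subtractf)

subsection \<open>Gram matrices\<close>

lemma Re_cnj_mult_self: "Re (cnj z * z) = (cmod z)\<^sup>2"
  by (simp add: mult.commute complex_mult_cnj cmod_power2)

lemma Re_diag_cadj_mult_self: "Re ((cadj T ** T) $ j $ j) = (\<Sum>i\<in>UNIV. (cmod (T $ i $ j))\<^sup>2)"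
  unfolding cadj_def matrix_matrix_mult_def
  by (simp only: vec_lambda_beta Re_sum Re_cnj_mult_self)

lemma cadj_mult_self_eq_0_iff [simp]: "cadj T ** T = 0 \<longleftrightarrow> T = 0"
proof
  assume gram: "cadj T ** T = 0"
  show "T = 0"
  proof (simp add: vec_eq_iff, intro allI)
    fix i j
    have "(\<Sum>i\<in>UNIV. (cmod (T $ i $ j))\<^sup>2) = 0"
      using Re_diag_cadj_mult_self[of T j] gram by (simp del: norm_eq_zero)
    then show "T $ i $ j = 0"
      by (simp add: sum_nonneg_eq_0_iff)
  qed
qed simp

lemma cadj_mult_cancel_left: "cadj A ** A ** Y = 0 \<Longrightarrow> A ** Y = 0"
  by (metis cadj_mult cadj_mult_self_eq_0_iff matrix_mul_assoc times0_right)

lemma mult_cadj_cancel_right: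
  assumes "Y ** B ** cadj B = 0"
  shows "Y ** B = 0"
proof -
  have "cadj (cadj B) ** cadj B ** cadj Y = 0"
    using arg_cong[OF assms, of cadj] by (simp add: cadj_mult matrix_mul_assoc)
  then have "cadj B ** cadj Y = 0"
    by (rule cadj_mult_cancel_left)
  then show ?thesis
    by (metis cadj_mult cadj_eq_0_iff)
qed

lemma gram_add_orthogonal:
  assumes "U ** cadj W = 0"
  shows "(U + W) ** cadj (U + W) = U ** cadj U + W ** cadj W"
proof -
  have "W ** cadj U = 0"
    using arg_cong[OF assms, of cadj] by (simp add: cadj_mult)
  with assms show ?thesis
    by (simp add: matrix_add_ldistrib matrix_add_rdistrib)
qed

lemma Re_trace_mult_cadj: "Re (trace (M ** cadj M)) = (\<Sum>i\<in>UNIV. \<Sum>j\<in>UNIV. (cmod (M $ i $ j))\<^sup>2)"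
proof -
  have "Re (trace (M ** cadj M)) = (\<Sum>i\<in>UNIV. Re ((cadj (cadj M) ** cadj M) $ i $ i))"
    by (simp add: trace_def Re_sum)
  also have "\<dots> = (\<Sum>i\<in>UNIV. \<Sum>j\<in>UNIV. (cmod (M $ i $ j))\<^sup>2)"
    by (simp only: Re_diag_cadj_mult_self) (simp add: cadj_def)
  finally show ?thesis .
qed

lemma Re_trace_mult_cadj_nonneg: "0 \<le> Re (trace (M ** cadj M))"
  by (simp add: Re_trace_mult_cadj sum_nonneg)

lemma Re_trace_mult_cadj_eq_0_iff: "Re (trace (M ** cadj M)) = 0 \<longleftrightarrow> M = 0"
proof
  assume "Re (trace (M ** cadj M)) = 0"
  then have "\<forall>i. \<forall>j. (cmod (M $ i $ j))\<^sup>2 = 0"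
    by (simp add: Re_trace_mult_cadj sum_nonneg_eq_0_iff sum_nonneg)
  then show "M = 0"
    by (simp add: vec_eq_iff)
qed (simp add: trace_def)

lemma quadratic_form_gram:
  "Re (\<Sum>i\<in>UNIV. cnj (x $ i) * ((W ** cadj W) *v x) $ i) = (\<Sum>k\<in>UNIV. (cmod ((cadj W *v x) $ k))\<^sup>2)"
proof -
  have "(\<Sum>i\<in>UNIV. cnj (x $ i) * ((W ** cadj W) *v x) $ i)
      = (\<Sum>i\<in>UNIV. cnj (x $ i) * (W *v (cadj W *v x)) $ i)"
    by (simp add: matrix_vector_mul_assoc)
  also have "\<dots> = (\<Sum>i\<in>UNIV. \<Sum>k\<in>UNIV. cnj (x $ i) * W $ i $ k * (cadj W *v x) $ k)"
    by (simp only: matrix_vector_mult_def vec_lambda_beta sum_distrib_left mult.assoc)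
  also have "\<dots> = (\<Sum>k\<in>UNIV. (\<Sum>i\<in>UNIV. cnj (x $ i) * W $ i $ k) * (cadj W *v x) $ k)"
    by (subst sum.swap) (simp add: sum_distrib_right)
  also have "\<dots> = (\<Sum>k\<in>UNIV. cnj ((cadj W *v x) $ k) * (cadj W *v x) $ k)"
    by (simp add: cadj_def matrix_vector_mult_def mult.commute)
  finally show ?thesis
    by (simp only: Re_sum Re_cnj_mult_self)
qed

lemma psd_gram: "psd (W ** cadj W)"
  unfolding psd_def hermitian_def quadratic_form_gram
  by (simp add: cadj_mult sum_nonneg)

lemma psd_uminus_gram_imp_0:
  assumes "psd (- (W ** cadj W))"
  shows "W = 0"
proof -
  have "cadj W *v x = 0 *v x" for x
  proof -
    have "0 \<le> - Re (\<Sum>i\<in>UNIV. cnj (x $ i) * ((W ** cadj W) *v x) $ i)"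
      using assms by (simp add: psd_def matrix_vector_mult_def sum_negf)
    then have "(\<Sum>k\<in>UNIV. (cmod ((cadj W *v x) $ k))\<^sup>2) = 0"
      unfolding quadratic_form_gram by (simp add: antisym sum_nonneg)
    then show ?thesis
      by (simp add: sum_nonneg_eq_0_iff vec_eq_iff)
  qed
  then have "cadj W = 0"
    using matrix_eq by blast
  then show "W = 0"
    by simp
qed

lemma loewner_minimizers_gram_offset:
  assumes "\<And>X. f X = K + g X ** cadj (g X)" and "g Z = 0"
  shows "{Xh. \<forall>X. loewner_ge (f X) (f Xh)} = {Xh. g Xh = 0}"
proof (intro set_eqI iffI; simp)
  fix Xh
  assume "\<forall>X. loewner_ge (f X) (f Xh)"
  then have "psd (- (g Xh ** cadj (g Xh)))"
    using assms by (auto simp: loewner_ge_def dest: spec[of _ Z])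
  then show "g Xh = 0"
    by (rule psd_uminus_gram_imp_0)
qed (simp add: assms loewner_ge_def psd_gram)

lemma trace_minimizers_gram_offset:
  assumes "\<And>X. Re (trace (f X)) = k + Re (trace (g X ** cadj (g X)))" and "g Z = 0"
  shows "{Xh. \<forall>X. Re (trace (f Xh)) \<le> Re (trace (f X))} = {Xh. g Xh = 0}"
proof (intro set_eqI iffI; simp)
  fix Xh
  assume "\<forall>X. Re (trace (f Xh)) \<le> Re (trace (f X))"
  then have "k + Re (trace (g Xh ** cadj (g Xh))) \<le> k + Re (trace (g Z ** cadj (g Z)))"
    using assms(1) by metis
  then have "Re (trace (g Xh ** cadj (g Xh))) \<le> 0"
    using assms(2) by (simp add: trace_def)
  then show "g Xh = 0"
    using Re_trace_mult_cadj_eq_0_iff Re_trace_mult_cadj_nonneg by (metis antisym)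
next
  fix Xh
  assume "g Xh = 0"
  then have "Re (trace (f Xh)) = k"
    using assms(1) by (simp add: trace_def)
  then show "\<forall>X. Re (trace (f Xh)) \<le> Re (trace (f X))"
    using assms(1) Re_trace_mult_cadj_nonneg by (metis le_add_same_cancel1)
qed

subsection \<open>The Moore-Penrose inverse\<close>

lemma inner_inverse_exists: "\<exists>G :: complex^'m^'n. A ** G ** A = (A :: complex^'n^'m)"
proof -
  obtain g where g: "Vector_Spaces.linear (*s) (*s) g" "\<forall>v\<in>range ((*v) A). A *v g v = v"
    using vec.linear_exists_right_inverse_on[OF matrix_vector_mul_linear_gen vec.subspace_UNIV, of A]
    by blast
  have "(A ** matrix g ** A) *v x = A *v x" for x
    using g by (simp add: matrix_vector_mul_assoc[symmetric] matrix_works)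
  then have "A ** matrix g ** A = A"
    using matrix_eq by blast
  then show ?thesis
    by blast
qed

lemma inner_inverse_gram_absorb:
  assumes "cadj A ** A ** N ** (cadj A ** A) = cadj A ** A"
  shows "A ** N ** (cadj A ** A) = A"
proof -
  have "cadj A ** A ** (N ** cadj A ** A - mat 1) = 0"
    using assms by (simp add: matrix_diff_ldistrib matrix_mul_assoc)
  then have "A ** (N ** cadj A ** A - mat 1) = 0"
    by (rule cadj_mult_cancel_left)
  then show ?thesis
    by (simp add: matrix_diff_ldistrib matrix_mul_assoc)
qed

lemma inverse_13_exists:
  "\<exists>G :: complex^'m^'n. A ** G ** A = (A :: complex^'n^'m) \<and> cadj (A ** G) = A ** G"
proof -
  obtain N where N: "cadj A ** A ** N ** (cadj A ** A) = cadj A ** A"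
    using inner_inverse_exists by blast
  have AN: "A ** N ** (cadj A ** A) = A"
    using N by (rule inner_inverse_gram_absorb)
  have "cadj A ** A ** cadj N ** (cadj A ** A) = cadj A ** A"
    using arg_cong[OF N, of cadj] by (simp add: cadj_mult matrix_mul_assoc)
  then have AN': "A ** cadj N ** (cadj A ** A) = A"
    by (rule inner_inverse_gram_absorb)
  have "A ** cadj N ** cadj A = A ** cadj N ** cadj (A ** cadj N ** (cadj A ** A))"
    by (simp only: AN')
  also have "\<dots> = (A ** cadj N ** (cadj A ** A)) ** N ** cadj A"
    by (simp add: cadj_mult matrix_mul_assoc)
  also have "\<dots> = A ** N ** cadj A"
    by (simp only: AN')
  finally have "cadj (A ** (N ** cadj A)) = A ** (N ** cadj A)"
    by (simp add: cadj_mult matrix_mul_assoc)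
  moreover have "A ** (N ** cadj A) ** A = A"
    using AN by (simp add: matrix_mul_assoc)
  ultimately show ?thesis
    by blast
qed

lemma inverse_14_exists:
  "\<exists>G :: complex^'m^'n. A ** G ** A = (A :: complex^'n^'m) \<and> cadj (G ** A) = G ** A"
proof -
  obtain H where H: "cadj A ** H ** cadj A = cadj A" "cadj (cadj A ** H) = cadj A ** H"
    using inverse_13_exists[of "cadj A"] by blast
  have "A ** cadj H ** A = A"
    using arg_cong[OF H(1), of cadj] by (simp add: cadj_mult matrix_mul_assoc)
  moreover have "cadj (cadj H ** A) = cadj H ** A"
    using H(2) by (simp add: cadj_mult)
  ultimately show ?thesis
    by blast
qed

definition penrose_inverse :: "complex^'c^'r \<Rightarrow> complex^'r^'c \<Rightarrow> bool" where
  "penrose_inverse A G \<longleftrightarrow> A ** G ** A = A \<and> G ** A ** G = G \<and>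
     cadj (A ** G) = A ** G \<and> cadj (G ** A) = G ** A"

lemma penrose_inverse_exists: "\<exists>G. penrose_inverse A G"
proof -
  obtain G1 where G1: "A ** G1 ** A = A" "cadj (A ** G1) = A ** G1"
    using inverse_13_exists by blast
  obtain G2 where G2: "A ** G2 ** A = A" "cadj (G2 ** A) = G2 ** A"
    using inverse_14_exists by blast
  have absorb1: "X ** A ** G1 ** A = X ** A" for X
    by (metis G1(1) matrix_mul_assoc)
  have absorb2: "X ** A ** G2 ** A = X ** A" for X
    by (metis G2(1) matrix_mul_assoc)
  define G where "G = G2 ** A ** G1"
  have "A ** G ** A = A" "G ** A ** G = G"
    by (simp_all add: G_def matrix_mul_assoc absorb1 absorb2 G1 G2)
  moreover have "A ** G = A ** G1" "G ** A = G2 ** A"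
    by (simp_all add: G_def matrix_mul_assoc absorb1 G2)
  ultimately show ?thesis
    unfolding penrose_inverse_def using G1 G2 by metis
qed

lemma penrose_inverse_unique:
  assumes "penrose_inverse A G" and "penrose_inverse A H"
  shows "G = H"
proof -
  have g: "A ** G ** A = A" "G ** A ** G = G" "cadj (A ** G) = A ** G" "cadj (G ** A) = G ** A"
    using assms(1) unfolding penrose_inverse_def by auto
  have h: "A ** H ** A = A" "H ** A ** H = H" "cadj (A ** H) = A ** H" "cadj (H ** A) = H ** A"
    using assms(2) unfolding penrose_inverse_def by auto
  have "cadj A = cadj (A ** H ** A)"
    by (simp add: h(1))
  also have "\<dots> = cadj A ** cadj (A ** H)"
    by (rule cadj_mult)
  finally have AH: "cadj A = cadj A ** A ** H"
    by (simp add: h(3) matrix_mul_assoc)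
  have "cadj A = cadj (A ** G ** A)"
    by (simp add: g(1))
  also have "\<dots> = cadj (G ** A) ** cadj A"
    by (simp add: cadj_mult matrix_mul_assoc)
  finally have GA: "cadj A = G ** A ** cadj A"
    by (simp add: g(4))
  have "G = G ** cadj (A ** G)"
    using g by (simp add: matrix_mul_assoc)
  also have "\<dots> = G ** cadj G ** cadj A"
    by (simp add: cadj_mult matrix_mul_assoc)
  also have "\<dots> = G ** cadj G ** cadj A ** A ** H"
    by (metis AH matrix_mul_assoc)
  also have "\<dots> = G ** cadj (A ** G) ** A ** H"
    by (simp add: cadj_mult matrix_mul_assoc)
  also have "\<dots> = G ** A ** H"
    using g by (simp add: matrix_mul_assoc)
  also have "\<dots> = G ** A ** (cadj (H ** A) ** H)"
    by (simp only: h(4) h(2))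
  also have "\<dots> = G ** A ** cadj A ** cadj H ** H"
    by (simp add: cadj_mult matrix_mul_assoc)
  also have "\<dots> = cadj (H ** A) ** H"
    by (metis GA cadj_mult matrix_mul_assoc)
  also have "\<dots> = H"
    by (simp only: h(4) h(2))
  finally show ?thesis .
qed

lemma penrose_inverse_mp_inv: "penrose_inverse A (mp_inv A)"
proof -
  have "\<exists>!G. penrose_inverse A G"
    using penrose_inverse_exists penrose_inverse_unique by blast
  then show ?thesis
    unfolding mp_inv_def penrose_inverse_def[symmetric] by (rule theI')
qed

lemma mp_inv_inner [simp]: "A ** mp_inv A ** A = A"
  and cadj_mult_mp_inv_self [simp]: "cadj (A ** mp_inv A) = A ** mp_inv A"
  and cadj_mp_inv_mult_self [simp]: "cadj (mp_inv A ** A) = mp_inv A ** A"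
  using penrose_inverse_mp_inv unfolding penrose_inverse_def by blast+

lemma cadj_mult_mp_inv: "cadj A ** A ** mp_inv A = cadj A"
proof -
  have "cadj A = cadj (A ** mp_inv A ** A)"
    by simp
  also have "\<dots> = cadj A ** (A ** mp_inv A)"
    by (subst cadj_mult) simp
  finally show ?thesis
    by (simp add: matrix_mul_assoc)
qed

lemma mp_inv_mult_cadj: "mp_inv B ** B ** cadj B = cadj B"
proof -
  have "cadj B = cadj (B ** (mp_inv B ** B))"
    by (simp add: matrix_mul_assoc)
  also have "\<dots> = mp_inv B ** B ** cadj B"
    by (subst cadj_mult) simp
  finally show ?thesis ..
qed

subsection \<open>The matrix equation \<open>AXB = AX\<^sub>0B\<close>\<close>

lemma mult_F_mat [simp]: "A ** F_mat A = 0"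
  by (simp add: F_mat_def matrix_diff_ldistrib matrix_mul_assoc)

lemma E_mat_mult [simp]: "E_mat B ** B = 0"
  by (simp add: E_mat_def matrix_diff_rdistrib)

lemma homogeneous_solutions:
  "{W. A ** W ** B = 0} = {F_mat A ** V1 + V2 ** E_mat B | V1 V2. True}"
proof (intro set_eqI iffI)
  fix W
  assume "W \<in> {W. A ** W ** B = 0}"
  then have AWB: "A ** W ** B = 0"
    by simp
  have "F_mat A ** W + (mp_inv A ** A ** W) ** E_mat B = W - mp_inv A ** (A ** W ** B) ** mp_inv B"
    by (simp add: F_mat_def E_mat_def matrix_diff_ldistrib matrix_diff_rdistrib matrix_mul_assoc)
  then have "F_mat A ** W + (mp_inv A ** A ** W) ** E_mat B = W"
    by (simp add: AWB)
  then show "W \<in> {F_mat A ** V1 + V2 ** E_mat B | V1 V2. True}"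
    by (metis (mono_tags, lifting) mem_Collect_eq)
next
  fix W
  assume "W \<in> {F_mat A ** V1 + V2 ** E_mat B | V1 V2. True}"
  then obtain V1 V2 where W: "W = F_mat A ** V1 + V2 ** E_mat B"
    by blast
  have "A ** (V2 ** E_mat B) ** B = A ** V2 ** (E_mat B ** B)"
    by (simp only: matrix_mul_assoc)
  then show "W \<in> {W. A ** W ** B = 0}"
    by (simp add: W matrix_add_ldistrib matrix_add_rdistrib matrix_mul_assoc)
qed

lemma solutions_shifted:
  "{X. A ** X ** B = A ** X0 ** B} = {X0 + F_mat A ** V1 + V2 ** E_mat B | V1 V2. True}"
proof -
  have "A ** X ** B = A ** X0 ** B \<longleftrightarrow> X - X0 \<in> {W. A ** W ** B = 0}" for X
    by (simp add: matrix_diff_ldistrib matrix_diff_rdistrib)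
  then show ?thesis
    unfolding homogeneous_solutions by (auto simp: algebra_simps)
qed

subsection \<open>The three minimization problems\<close>

lemma residual_orthogonal: "cadj A ** (C - A ** (mp_inv A ** C ** mp_inv B) ** B) ** cadj B = 0"
proof -
  have "cadj A ** (A ** (mp_inv A ** C ** mp_inv B) ** B) ** cadj B
      = (cadj A ** A ** mp_inv A) ** C ** (mp_inv B ** B ** cadj B)"
    by (simp add: matrix_mul_assoc)
  then show ?thesis
    by (simp add: cadj_mult_mp_inv mp_inv_mult_cadj matrix_diff_ldistrib matrix_diff_rdistrib)
qed

lemma residual_split:
  fixes A :: "'a::ring_1^'n^'m"
  shows "C - A ** X ** B = (C - A ** X0 ** B) + A ** (X0 - X) ** B"
  by (simp add: matrix_diff_ldistrib matrix_diff_rdistrib)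

lemma shifted_eq_0_iff:
  fixes A :: "'a::ring_1^'n^'m"
  shows "A ** (X0 - X) ** B = 0 \<longleftrightarrow> A ** X ** B = A ** X0 ** B"
  by (auto simp: matrix_diff_ldistrib matrix_diff_rdistrib)

lemma loewner_left_minimizers:
  "{Xh. \<forall>X. loewner_ge (cadj A ** (C - A ** X ** B) ** cadj (C - A ** X ** B) ** A)
                       (cadj A ** (C - A ** Xh ** B) ** cadj (C - A ** Xh ** B) ** A)}
   = {Xh. A ** Xh ** B = A ** (mp_inv A ** C ** mp_inv B) ** B}"
proof -
  define X0 where "X0 = mp_inv A ** C ** mp_inv B"
  define D where "D = C - A ** X0 ** B"
  define G where "G X = cadj A ** A ** ((X0 - X) ** B)" for X
  have orth: "cadj A ** D ** cadj B = 0"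
    unfolding D_def X0_def by (rule residual_orthogonal)
  have split: "cadj A ** (C - A ** X ** B) ** cadj (C - A ** X ** B) ** A
      = (cadj A ** D) ** cadj (cadj A ** D) + G X ** cadj (G X)" for X
  proof -
    have "(cadj A ** D) ** cadj (G X) = (cadj A ** D ** cadj B) ** cadj (X0 - X) ** cadj A ** A"
      by (simp add: G_def cadj_mult matrix_mul_assoc)
    then have cross: "(cadj A ** D) ** cadj (G X) = 0"
      by (simp add: orth)
    have "C - A ** X ** B = D + A ** (X0 - X) ** B"
      unfolding D_def by (rule residual_split)
    then have "cadj A ** (C - A ** X ** B) = cadj A ** D + G X"
      by (simp add: G_def matrix_add_ldistrib matrix_mul_assoc)
    then have "cadj A ** (C - A ** X ** B) ** cadj (C - A ** X ** B) ** A
        = (cadj A ** D + G X) ** cadj (cadj A ** D + G X)"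
      by (metis cadj_cadj cadj_mult matrix_mul_assoc)
    then show ?thesis
      by (simp only: gram_add_orthogonal[OF cross])
  qed
  have "G Xh = 0 \<longleftrightarrow> A ** ((X0 - Xh) ** B) = 0" for Xh
    by (metis G_def cadj_mult_cancel_left matrix_mul_assoc times0_right)
  then have "G Xh = 0 \<longleftrightarrow> A ** Xh ** B = A ** X0 ** B" for Xh
    by (simp add: matrix_mul_assoc shifted_eq_0_iff)
  moreover have "{Xh. \<forall>X. loewner_ge (cadj A ** (C - A ** X ** B) ** cadj (C - A ** X ** B) ** A)
                       (cadj A ** (C - A ** Xh ** B) ** cadj (C - A ** Xh ** B) ** A)}
      = {Xh. G Xh = 0}"
    by (rule loewner_minimizers_gram_offset[where Z = X0, OF split]) (simp add: G_def)
  ultimately show ?thesis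
    by (simp add: X0_def)
qed

lemma loewner_right_minimizers:
  "{Xh. \<forall>X. loewner_ge (B ** cadj (C - A ** X ** B) ** (C - A ** X ** B) ** cadj B)
                       (B ** cadj (C - A ** Xh ** B) ** (C - A ** Xh ** B) ** cadj B)}
   = {Xh. A ** Xh ** B = A ** (mp_inv A ** C ** mp_inv B) ** B}"
proof -
  define X0 where "X0 = mp_inv A ** C ** mp_inv B"
  define D where "D = C - A ** X0 ** B"
  define G where "G X = B ** cadj (A ** (X0 - X) ** B)" for X
  have orth: "cadj A ** D ** cadj B = 0"
    unfolding D_def X0_def by (rule residual_orthogonal)
  have split: "B ** cadj (C - A ** X ** B) ** (C - A ** X ** B) ** cadj B
      = (B ** cadj D) ** cadj (B ** cadj D) + G X ** cadj (G X)" for X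
  proof -
    have "(B ** cadj D) ** cadj (G X) = cadj (cadj A ** D ** cadj B) ** (X0 - X) ** B ** cadj B"
      by (simp add: G_def cadj_mult matrix_mul_assoc)
    then have cross: "(B ** cadj D) ** cadj (G X) = 0"
      by (simp add: orth)
    have "C - A ** X ** B = D + A ** (X0 - X) ** B"
      unfolding D_def by (rule residual_split)
    then have "B ** cadj (C - A ** X ** B) = B ** cadj D + G X"
      by (simp add: G_def matrix_add_ldistrib)
    then have "B ** cadj (C - A ** X ** B) ** (C - A ** X ** B) ** cadj B
        = (B ** cadj D + G X) ** cadj (B ** cadj D + G X)"
      by (metis cadj_cadj cadj_mult matrix_mul_assoc)
    then show ?thesis
      by (simp only: gram_add_orthogonal[OF cross])
  qed
  have "G Xh = 0 \<longleftrightarrow> A ** (X0 - Xh) ** B = 0" for Xh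
    by (metis G_def cadj_eq_0_iff cadj_mult cadj_cadj mult_cadj_cancel_right times0_left)
  then have "G Xh = 0 \<longleftrightarrow> A ** Xh ** B = A ** X0 ** B" for Xh
    by (simp add: shifted_eq_0_iff)
  moreover have "{Xh. \<forall>X. loewner_ge (B ** cadj (C - A ** X ** B) ** (C - A ** X ** B) ** cadj B)
                       (B ** cadj (C - A ** Xh ** B) ** (C - A ** Xh ** B) ** cadj B)}
      = {Xh. G Xh = 0}"
    by (rule loewner_minimizers_gram_offset[where Z = X0, OF split]) (simp add: G_def)
  ultimately show ?thesis
    by (simp add: X0_def)
qed

lemma trace_minimizers:
  "{Xh. \<forall>X. Re (trace ((C - A ** Xh ** B) ** cadj (C - A ** Xh ** B)))
              \<le> Re (trace ((C - A ** X ** B) ** cadj (C - A ** X ** B)))}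
   = {Xh. A ** Xh ** B = A ** (mp_inv A ** C ** mp_inv B) ** B}"
proof -
  define X0 where "X0 = mp_inv A ** C ** mp_inv B"
  define D where "D = C - A ** X0 ** B"
  define V where "V X = A ** (X0 - X) ** B" for X
  have orth: "cadj A ** D ** cadj B = 0"
    unfolding D_def X0_def by (rule residual_orthogonal)
  have split: "Re (trace ((C - A ** X ** B) ** cadj (C - A ** X ** B)))
      = Re (trace (D ** cadj D)) + Re (trace (V X ** cadj (V X)))" for X
  proof -
    have "trace (D ** cadj (V X)) = trace (cadj A ** D ** cadj B ** cadj (X0 - X))"
      using trace_mul_sym[of "D ** cadj B ** cadj (X0 - X)" "cadj A"]
      by (simp add: V_def cadj_mult matrix_mul_assoc)
    then have cross1: "trace (D ** cadj (V X)) = 0"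
      by (simp add: orth trace_def)
    have "trace (V X ** cadj D) = trace ((X0 - X) ** cadj (cadj A ** D ** cadj B))"
      using trace_mul_sym[of A "(X0 - X) ** B ** cadj D"]
      by (simp add: V_def cadj_mult matrix_mul_assoc)
    then have cross2: "trace (V X ** cadj D) = 0"
      by (simp add: orth trace_def)
    have "C - A ** X ** B = D + V X"
      unfolding D_def V_def by (rule residual_split)
    then have "(C - A ** X ** B) ** cadj (C - A ** X ** B)
        = D ** cadj D + D ** cadj (V X) + V X ** cadj D + V X ** cadj (V X)"
      by (simp add: matrix_add_ldistrib matrix_add_rdistrib)
    then show ?thesis
      by (simp add: trace_add cross1 cross2)
  qed
  have "{Xh. \<forall>X. Re (trace ((C - A ** Xh ** B) ** cadj (C - A ** Xh ** B)))
              \<le> Re (trace ((C - A ** X ** B) ** cadj (C - A ** X ** B)))} = {Xh. V Xh = 0}"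
    by (rule trace_minimizers_gram_offset[where Z = X0, OF split]) (simp add: V_def)
  then show ?thesis
    by (simp add: V_def X0_def shifted_eq_0_iff)
qed

theorem theorem7p4:
  fixes A :: "complex^'n^'m" and B :: "complex^'q^'p" and C :: "complex^'q^'m"
  shows
  "(\<exists>Xh :: complex^'p^'n. \<forall>X :: complex^'p^'n.
       loewner_ge (cadj A ** (C - A ** X ** B) ** cadj (C - A ** X ** B) ** A)
                  (cadj A ** (C - A ** Xh ** B) ** cadj (C - A ** Xh ** B) ** A))
 \<and> (\<exists>Xh :: complex^'p^'n. \<forall>X :: complex^'p^'n.
       loewner_ge (B ** cadj (C - A ** X ** B) ** (C - A ** X ** B) ** cadj B)
                  (B ** cadj (C - A ** Xh ** B) ** (C - A ** Xh ** B) ** cadj B))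
 \<and> {Xh :: complex^'p^'n. \<forall>X :: complex^'p^'n.
       loewner_ge (cadj A ** (C - A ** X ** B) ** cadj (C - A ** X ** B) ** A)
                  (cadj A ** (C - A ** Xh ** B) ** cadj (C - A ** Xh ** B) ** A)}
   = {Xh :: complex^'p^'n. \<forall>X :: complex^'p^'n.
       loewner_ge (B ** cadj (C - A ** X ** B) ** (C - A ** X ** B) ** cadj B)
                  (B ** cadj (C - A ** Xh ** B) ** (C - A ** Xh ** B) ** cadj B)}
 \<and> {Xh :: complex^'p^'n. \<forall>X :: complex^'p^'n.
       loewner_ge (B ** cadj (C - A ** X ** B) ** (C - A ** X ** B) ** cadj B)
                  (B ** cadj (C - A ** Xh ** B) ** (C - A ** Xh ** B) ** cadj B)}
   = {Xh :: complex^'p^'n. \<forall>X :: complex^'p^'n.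
       Re (trace ((C - A ** Xh ** B) ** cadj (C - A ** Xh ** B)))
         \<le> Re (trace ((C - A ** X ** B) ** cadj (C - A ** X ** B)))}
 \<and> {Xh :: complex^'p^'n. \<forall>X :: complex^'p^'n.
       Re (trace ((C - A ** Xh ** B) ** cadj (C - A ** Xh ** B)))
         \<le> Re (trace ((C - A ** X ** B) ** cadj (C - A ** X ** B)))}
   = {mp_inv A ** C ** mp_inv B + F_mat A ** V1 + V2 ** E_mat B
        | V1 V2 :: complex^'p^'n. True}"
proof -
  have "mp_inv A ** C ** mp_inv B \<in> {Xh. A ** Xh ** B = A ** (mp_inv A ** C ** mp_inv B) ** B}"
    by simp
  note minimizer = this[folded loewner_left_minimizers] this[folded loewner_right_minimizers]
  show ?thesis
    using minimizer[unfolded mem_Collect_eq]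
    unfolding loewner_left_minimizers loewner_right_minimizers trace_minimizers solutions_shifted
    by blast
qed

end
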